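(* Let $0<r_j<\infty$, $0<s_j<\infty$ for $j=1,\dots,n$, let $\mathbf{u}_1,\mathbf{u}_2\in\mathbb{C}^n$, and let $\rho=W(\mathbf{u}_1)\gamma(\mathbf{r})W(\mathbf{u}_1)^\dagger$ and $\sigma=W(\mathbf{u}_2)\gamma(\mathbf{s})W(\mathbf{u}_2)^\dagger$, where $\gamma(\mathbf{r})=\otimes_{j}\gamma(r_j)$, $\gamma(\mathbf{s})=\otimes_j\gamma(s_j)$. Let $\alpha>1$ and let $V_{\sigma(\alpha-1)}$ and $V_{\rho(\alpha)}$ denote the covariance matrices of the gaussian states $\sigma^{\alpha-1}/\operatorname{tr}\sigma^{\alpha-1}$ and $\rho^\alpha/\operatorname{tr}\rho^\alpha$ respectively. If $D_\alpha(\rho\|\sigma)<\infty$, then $V_{\sigma(\alpha-1)}>V_{\rho(\alpha)}$.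
   Context: One-mode Fock space: $\ell^2(\mathbb{Z}_{\ge 0})$ with orthonormal particle basis $\{|k\rangle\}$; $n$-mode space is the $n$-fold tensor product. For $0<s<\infty$, $\gamma(s)=(1-e^{-s})\sum_{k\ge0}e^{-ks}|k\rangle\langle k|$. For $u\in\mathbb{C}$, $|e(v)\rangle=\sum_k\frac{v^k}{\sqrt{k!}}|k\rangle$ and $W(u)$ is the unitary with $W(u)|e(v)\rangle=\exp(-\tfrac12|u|^2-\bar uv)|e(u+v)\rangle$; $W(\mathbf{u})=W(u_1)\otimes\cdots\otimes W(u_n)$. For $\beta>0$, $\gamma(\mathbf{s})^\beta/\operatorname{tr}\gamma(\mathbf{s})^\beta=\gamma(\beta\mathbf{s})$, and the covariance matrix of $\gamma(\mathbf{s})$ (and of any displacement $W(\mathbf{u})\gamma(\mathbf{s})W(\mathbf{u})^\dagger$) is the $2n\times2n$ matrix $\frac12\operatorname{diag}(\coth\frac{s_1}{2},\dots,\coth\frac{s_n}{2})\otimes I_2$. For real symmetric matrices, $A>B$ means $A-B$ is positive definite. For states $\rho=\sum_i p_i|x_i\rangle\langle x_i|$, $\sigma=\sum_j q_j|y_j\rangle\langle y_j|$ (spectral decompositions), $D_\alpha(\rho\|\sigma)=\frac{1}{\alpha-1}\log\sum_{i,j}p_i^\alpha q_j^{1-\alpha}|\langle x_i|y_j\rangle|^2$ for $\alpha\in(0,1)\cup(1,\infty)$, with conventions $0^{1-\alpha}=\infty$ ($\alpha>1$) and $0\cdot\infty=0$. *)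

theory Defs
  imports "HOL-Analysis.Analysis"
begin

text \<open>Vectors in Fock space are represented by their coefficient functions with respect
  to the particle (number) basis; for n modes indexed by a finite type 'n, the basis is indexed
  by multi-indices 'n \<Rightarrow> nat.\<close>

definition ip :: "('h \<Rightarrow> complex) \<Rightarrow> ('h \<Rightarrow> complex) \<Rightarrow> complex" where
  "ip x y = infsum (\<lambda>l. cnj (x l) * y l) UNIV"

text \<open>Matrix elements of the one-mode Weyl operator W(u) in the particle basis:
  weyl_elem u k m = <k| W(u) |m>.  They are determined by the defining relation
  W(u)|e(v)> = exp(-|u|^2/2 - conj(u) v) |e(u+v)>, read off componentwise.\<close>

definition weyl_elem :: "complex \<Rightarrow> nat \<Rightarrow> nat \<Rightarrow> complex" where
  "weyl_elem u = (THE w. \<forall>k v.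
      (\<lambda>m. w k m * v ^ m / complex_of_real (sqrt (fact m))) sums
      (exp (- complex_of_real ((cmod u)\<^sup>2 / 2) - cnj u * v) * (u + v) ^ k
         / complex_of_real (sqrt (fact k))))"

text \<open>The vector W(\<u>)|\<k>> for a multi-index \<k>, as coefficient function.\<close>

definition displaced_basis :: "('n::finite \<Rightarrow> complex) \<Rightarrow> ('n \<Rightarrow> nat) \<Rightarrow> ('n \<Rightarrow> nat) \<Rightarrow> complex" where
  "displaced_basis u k = (\<lambda>l. \<Prod>j\<in>UNIV. weyl_elem (u j) (l j) (k j))"

text \<open>Eigenvalues of gamma(\<s>) = tensor product of gamma(s_j) on |\<k>>.\<close>

definition thermal_eig :: "('n::finite \<Rightarrow> real) \<Rightarrow> ('n \<Rightarrow> nat) \<Rightarrow> real" where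
  "thermal_eig s k = (\<Prod>j\<in>UNIV. (1 - exp (- s j)) * exp (- real (k j) * s j))"

text \<open>Renyi divergence D_alpha as in the paper from spectral decompositions
  rho = sum_i p_i |x_i><x_i|, sigma = sum_j q_j |y_j><y_j|, with conventions
  0^(1-alpha) = infinity for alpha > 1 and 0 * infinity = 0 (ennreal arithmetic).\<close>

definition neg_pow_term :: "real \<Rightarrow> real \<Rightarrow> ennreal" where
  "neg_pow_term \<alpha> q = (if q = 0 then (if \<alpha> > 1 then top else 0) else ennreal (q powr (1 - \<alpha>)))"

definition renyi_div :: "real \<Rightarrow> ('i \<Rightarrow> real) \<Rightarrow> ('i \<Rightarrow> 'h \<Rightarrow> complex)
    \<Rightarrow> ('j \<Rightarrow> real) \<Rightarrow> ('j \<Rightarrow> 'h \<Rightarrow> complex) \<Rightarrow> ereal" where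
  "renyi_div \<alpha> p x q y =
     (let S = infsum (\<lambda>(i, j). ennreal (p i powr \<alpha>) * neg_pow_term \<alpha> (q j)
                        * ennreal ((cmod (ip (x i) (y j)))\<^sup>2)) UNIV
      in if S = top then PInfty
         else if S = 0 then (if \<alpha> > 1 then MInfty else PInfty)
         else ereal (ln (enn2real S) / (\<alpha> - 1)))"

definition coth :: "real \<Rightarrow> real" where
  "coth x = cosh x / sinh x"

text \<open>Covariance matrix (2n x 2n, rows/columns indexed by 'n \<times> bool) of gamma(\<s>) and of any
  displacement of it: (1/2) diag(coth(s_1/2),...,coth(s_n/2)) \<otimes> I_2.\<close>

definition cov_thermal :: "('n::finite \<Rightarrow> real) \<Rightarrow> ('n \<times> bool) \<Rightarrow> ('n \<times> bool) \<Rightarrow> real" where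
  "cov_thermal s = (\<lambda>(j, a) (k, b). if j = k \<and> a = b then coth (s j / 2) / 2 else 0)"

definition pos_def :: "('a::finite \<Rightarrow> 'a \<Rightarrow> real) \<Rightarrow> bool" where
  "pos_def A \<longleftrightarrow> (\<forall>x::'a \<Rightarrow> real. (\<exists>i. x i \<noteq> 0) \<longrightarrow> (\<Sum>i\<in>UNIV. \<Sum>k\<in>UNIV. x i * A i k * x k) > 0)"

end

theory Submission
  imports Defs
begin

text \<open>If \<alpha> r_j \<le> (\<alpha> - 1) s_j for some mode j, the Renyi sum diverges. Restricted to number
  states excited in mode j only, its terms are, up to a positive constant,
  exp (- \<alpha> a r_j + (\<alpha> - 1) b s_j) |<a| W(u) |b>|^2 with u = u2_j - u1_j, and on the triangle
  a \<le> b the exponential factor is at least 1. But |<a| W(u) |b>| is symmetric in a and b and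
  every column of the unitary W(u) has norm 1, so the squared moduli are not summable over the
  triangle. Hence a finite D_\<alpha> forces (\<alpha> - 1) s_j < \<alpha> r_j for every j, and since coth
  decreases on (0, \<infinity>), the difference of the two diagonal covariance matrices is positive
  definite. The matrix elements of W(u) are read off from its action on exponential vectors
  by comparing coefficients of power series in v.\<close>

section \<open>Matrix elements of the Weyl operator\<close>

definition weyl_coeff :: "nat \<Rightarrow> nat \<Rightarrow> nat \<Rightarrow> real" where
  "weyl_coeff l j p = sqrt (fact l * fact j) / (fact (l - p) * fact (j - p) * fact p)"

definition weyl_poly :: "'a::{real_normed_field,banach} \<Rightarrow> 'a \<Rightarrow> nat \<Rightarrow> nat \<Rightarrow> 'a" where
  "weyl_poly x y l j = (\<Sum>p\<le>min l j. of_real (weyl_coeff l j p) * x ^ (l - p) * y ^ (j - p))"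

definition weyl_matrix :: "complex \<Rightarrow> nat \<Rightarrow> nat \<Rightarrow> complex" where
  "weyl_matrix u l j = of_real (exp (- (cmod u)\<^sup>2 / 2)) * weyl_poly u (- cnj u) l j"

definition weyl_gen_factor :: "complex \<Rightarrow> complex \<Rightarrow> complex" where
  "weyl_gen_factor u v = exp (- complex_of_real ((cmod u)\<^sup>2 / 2) - cnj u * v)"

abbreviation sqrt_fact :: "nat \<Rightarrow> complex" where
  "sqrt_fact j \<equiv> complex_of_real (sqrt (fact j))"

lemma sums_exp_shifted:
  fixes z c :: "'a::{real_normed_field,banach}"
  shows "(\<lambda>j. if p \<le> j then c * (z ^ (j - p) / of_real (fact (j - p))) else 0) sums (c * exp z)"
proof -
  have "(\<lambda>n. c * (z ^ n / of_real (fact n))) sums (c * exp z)"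
    using sums_mult[OF exp_converges[of z], of c] by (simp add: scaleR_conv_of_real divide_inverse mult.commute)
  then have "(\<lambda>n. (\<lambda>j. if p \<le> j then c * (z ^ (j - p) / of_real (fact (j - p))) else 0) (n + p))
               sums (c * exp z)"
    by simp
  then show ?thesis
    by (subst (asm) sums_iff_shift) simp
qed

lemma binomial_div_sqrt_fact:
  fixes x v :: "'a::{real_normed_field,banach}"
  shows "(x + v) ^ l / of_real (sqrt (fact l))
           = (\<Sum>p\<le>l. of_real (sqrt (fact l) / (fact (l - p) * fact p)) * x ^ (l - p) * v ^ p)"
proof -
  have "(x + v) ^ l = (\<Sum>p\<le>l. of_nat (l choose p) * v ^ p * x ^ (l - p))"
    by (subst add.commute) (rule binomial_ring)
  also have "\<dots> / of_real (sqrt (fact l))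
      = (\<Sum>p\<le>l. of_real (sqrt (fact l) / (fact (l - p) * fact p)) * x ^ (l - p) * v ^ p)"
    unfolding sum_divide_distrib
  proof (rule sum.cong[OF refl])
    fix p assume "p \<in> {..l}"
    then have "real (l choose p) / sqrt (fact l) = sqrt (fact l) / (fact (l - p) * fact p)"
      by (simp add: binomial_fact field_simps real_div_sqrt)
    then have "(of_nat (l choose p) :: 'a) / of_real (sqrt (fact l))
                 = of_real (sqrt (fact l) / (fact (l - p) * fact p))"
      by (metis of_real_divide of_real_of_nat_eq)
    then show "of_nat (l choose p) * v ^ p * x ^ (l - p) / of_real (sqrt (fact l))
                 = of_real (sqrt (fact l) / (fact (l - p) * fact p)) * x ^ (l - p) * v ^ p"
      by (simp add: field_simps)
  qed
  finally show ?thesis .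
qed

lemma weyl_poly_cauchy_product:
  fixes x y v :: "'a::{real_normed_field,banach}"
  shows "(\<Sum>p\<le>l. if p \<le> j then of_real (sqrt (fact l) / (fact (l - p) * fact p)) * x ^ (l - p) * v ^ p
                                  * ((y * v) ^ (j - p) / of_real (fact (j - p))) else 0)
           = weyl_poly x y l j * v ^ j / of_real (sqrt (fact j))"
proof -
  have "(\<Sum>p\<le>l. if p \<le> j then of_real (sqrt (fact l) / (fact (l - p) * fact p)) * x ^ (l - p) * v ^ p
                   * ((y * v) ^ (j - p) / of_real (fact (j - p))) else 0)
      = (\<Sum>p\<le>min l j. of_real (sqrt (fact l) / (fact (l - p) * fact p)) * x ^ (l - p) * v ^ p
                   * ((y * v) ^ (j - p) / of_real (fact (j - p))))"
    by (rule sum.mono_neutral_cong_right) auto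
  also have "\<dots> = (\<Sum>p\<le>min l j. of_real (weyl_coeff l j p) * x ^ (l - p) * y ^ (j - p) * v ^ j
                                   / of_real (sqrt (fact j)))"
  proof (rule sum.cong[OF refl])
    fix p assume "p \<in> {..min l j}"
    then have vj: "v ^ j = v ^ p * v ^ (j - p)"
      by (simp add: power_add[symmetric])
    have coeff: "weyl_coeff l j p / sqrt (fact j) = sqrt (fact l) / (fact (l - p) * fact p) / fact (j - p)"
      unfolding weyl_coeff_def by (simp add: real_sqrt_mult field_simps)
    have "of_real (weyl_coeff l j p) * x ^ (l - p) * y ^ (j - p) * v ^ j / of_real (sqrt (fact j))
        = of_real (weyl_coeff l j p / sqrt (fact j)) * x ^ (l - p) * y ^ (j - p) * v ^ j"
      by (simp add: field_simps)
    also have "\<dots> = of_real (sqrt (fact l) / (fact (l - p) * fact p) / fact (j - p))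
                      * x ^ (l - p) * y ^ (j - p) * (v ^ p * v ^ (j - p))"
      by (simp only: coeff vj)
    also have "\<dots> = of_real (sqrt (fact l) / (fact (l - p) * fact p)) * x ^ (l - p) * v ^ p
                       * ((y * v) ^ (j - p) / of_real (fact (j - p)))"
      by (simp add: field_simps power_mult_distrib)
    finally show "of_real (sqrt (fact l) / (fact (l - p) * fact p)) * x ^ (l - p) * v ^ p
                       * ((y * v) ^ (j - p) / of_real (fact (j - p)))
                   = of_real (weyl_coeff l j p) * x ^ (l - p) * y ^ (j - p) * v ^ j / of_real (sqrt (fact j))"
      by simp
  qed
  also have "\<dots> = weyl_poly x y l j * v ^ j / of_real (sqrt (fact j))"
    unfolding weyl_poly_def by (simp add: sum_distrib_right sum_divide_distrib)
  finally show ?thesis .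
qed

lemma weyl_poly_sums:
  fixes x y v :: "'a::{real_normed_field,banach}"
  shows "(\<lambda>j. weyl_poly x y l j * v ^ j / of_real (sqrt (fact j)))
           sums (exp (y * v) * (x + v) ^ l / of_real (sqrt (fact l)))"
proof -
  define c where "c p = of_real (sqrt (fact l) / (fact (l - p) * fact p)) * x ^ (l - p) * v ^ p" for p
  have "(\<lambda>j. \<Sum>p\<le>l. if p \<le> j then c p * ((y * v) ^ (j - p) / of_real (fact (j - p))) else 0)
          sums (\<Sum>p\<le>l. c p * exp (y * v))"
    by (intro sums_sum sums_exp_shifted)
  moreover have "(\<Sum>p\<le>l. c p * exp (y * v)) = exp (y * v) * (x + v) ^ l / of_real (sqrt (fact l))"
    unfolding sum_distrib_right[symmetric] c_def binomial_div_sqrt_fact[symmetric]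
    by (simp add: mult.commute)
  ultimately show ?thesis
    unfolding c_def weyl_poly_cauchy_product by simp
qed

lemma weyl_matrix_sums:
  "(\<lambda>j. weyl_matrix u l j * v ^ j / sqrt_fact j) sums (weyl_gen_factor u v * (u + v) ^ l / sqrt_fact l)"
proof -
  have "exp (- complex_of_real ((cmod u)\<^sup>2 / 2) - cnj u * v)
          = of_real (exp (- (cmod u)\<^sup>2 / 2)) * exp (- cnj u * v)"
    by (simp only: exp_of_real[symmetric] mult_exp_exp) simp
  then show ?thesis
    using sums_mult[OF weyl_poly_sums[of u "- cnj u" l v], of "of_real (exp (- (cmod u)\<^sup>2 / 2))"]
    unfolding weyl_matrix_def weyl_gen_factor_def by (simp add: mult.assoc)
qed

lemma powser_coeffs_eq_0:
  fixes c :: "nat \<Rightarrow> 'a::{real_normed_field,banach}"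
  assumes "\<And>z. (\<lambda>n. c n * z ^ n) sums 0"
  shows "c n = 0"
proof (induction n rule: less_induct)
  case (less n)
  have "(\<lambda>m. c (m + n) * z ^ m) sums 0" if "z \<noteq> 0" for z
  proof -
    have "(\<lambda>m. c (m + n) * z ^ (m + n)) sums 0"
      using assms[of z] less by (subst sums_iff_shift) simp
    then have "(\<lambda>m. c (m + n) * z ^ (m + n) / z ^ n) sums (0 / z ^ n)"
      by (rule sums_divide)
    then show ?thesis
      using that by (simp add: power_add)
  qed
  then have "((\<lambda>_. 0) \<longlongrightarrow> c (0 + n)) (at (0::'a))"
    by (intro powser_limit_0_strong[of 1]) auto
  then show ?case
    by (simp add: tendsto_const_iff)
qed

lemma powser_coeffs_unique:
  fixes a b :: "nat \<Rightarrow> 'a::{real_normed_field,banach}"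
  assumes "\<And>z. (\<lambda>n. a n * z ^ n) sums f z" and "\<And>z. (\<lambda>n. b n * z ^ n) sums f z"
  shows "a = b"
proof
  fix n
  have "(\<lambda>n. (a n - b n) * z ^ n) sums 0" for z
    using sums_diff[OF assms(1)[of z] assms(2)[of z]] by (simp add: algebra_simps)
  then show "a n = b n"
    using powser_coeffs_eq_0[of "\<lambda>n. a n - b n"] by simp
qed

lemma weyl_elem_eq_weyl_matrix: "weyl_elem u = weyl_matrix u"
  unfolding weyl_elem_def weyl_gen_factor_def[symmetric]
proof (rule the_equality)
  show "\<forall>l v. (\<lambda>j. weyl_matrix u l j * v ^ j / sqrt_fact j) sums (weyl_gen_factor u v * (u + v) ^ l / sqrt_fact l)"
    using weyl_matrix_sums by blast
next
  fix w
  assume w: "\<forall>l v. (\<lambda>j. w l j * v ^ j / sqrt_fact j) sums (weyl_gen_factor u v * (u + v) ^ l / sqrt_fact l)"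
  show "w = weyl_matrix u"
  proof
    fix l
    have "(\<lambda>j. w l j / sqrt_fact j) = (\<lambda>j. weyl_matrix u l j / sqrt_fact j)"
      by (rule powser_coeffs_unique[where f = "\<lambda>v. weyl_gen_factor u v * (u + v) ^ l / sqrt_fact l"])
        (use w weyl_matrix_sums in auto)
    then show "w l = weyl_matrix u l"
      by (auto simp: fun_eq_iff)
  qed
qed

section \<open>Inner products of displaced number states\<close>

lemma weyl_coeff_commute: "weyl_coeff l j p = weyl_coeff j l p"
  unfolding weyl_coeff_def by (simp add: mult.commute mult.left_commute)

lemma weyl_matrix_adjoint: "weyl_matrix u l j = cnj (weyl_matrix (- u) j l)"
  unfolding weyl_matrix_def weyl_poly_def
  by (simp add: cnj_sum weyl_coeff_commute min.commute mult.commute mult.left_commute)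

lemma norm_weyl_matrix_le:
  "cmod (weyl_matrix u l j) \<le> exp (- (cmod u)\<^sup>2 / 2) * weyl_poly (cmod u) (cmod u) l j"
proof -
  have "weyl_coeff l j p \<ge> 0" for p
    unfolding weyl_coeff_def by simp
  then have "cmod (weyl_poly u (- cnj u) l j) \<le> weyl_poly (cmod u) (cmod u) l j"
    unfolding weyl_poly_def
    by (intro order_trans[OF norm_sum]) (simp add: norm_mult norm_power)
  then show ?thesis
    unfolding weyl_matrix_def by (simp add: norm_mult)
qed

lemma weyl_matrix_row_bound:
  assumes "t \<ge> 0"
  shows "summable (\<lambda>j. cmod (weyl_matrix u l j) * t ^ j / sqrt (fact j))"
    and "(\<Sum>j. cmod (weyl_matrix u l j) * t ^ j / sqrt (fact j))
           \<le> exp (- (cmod u)\<^sup>2 / 2) * exp (cmod u * t) * (cmod u + t) ^ l / sqrt (fact l)"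
proof -
  have majorant: "(\<lambda>j. exp (- (cmod u)\<^sup>2 / 2) * weyl_poly (cmod u) (cmod u) l j * t ^ j / sqrt (fact j))
      sums (exp (- (cmod u)\<^sup>2 / 2) * exp (cmod u * t) * (cmod u + t) ^ l / sqrt (fact l))"
    using sums_mult[OF weyl_poly_sums[of "cmod u" "cmod u" l t], of "exp (- (cmod u)\<^sup>2 / 2)"]
    by (simp add: mult.assoc)
  have le: "cmod (weyl_matrix u l j) * t ^ j / sqrt (fact j)
      \<le> exp (- (cmod u)\<^sup>2 / 2) * weyl_poly (cmod u) (cmod u) l j * t ^ j / sqrt (fact j)" for j
    using norm_weyl_matrix_le[of u l j] assms by (intro divide_right_mono mult_right_mono) auto
  show summ: "summable (\<lambda>j. cmod (weyl_matrix u l j) * t ^ j / sqrt (fact j))"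
    by (rule summable_comparison_test[OF _ sums_summable[OF majorant]]) (use le assms in auto)
  show "(\<Sum>j. cmod (weyl_matrix u l j) * t ^ j / sqrt (fact j))
           \<le> exp (- (cmod u)\<^sup>2 / 2) * exp (cmod u * t) * (cmod u + t) ^ l / sqrt (fact l)"
    using suminf_le[OF le summ sums_summable[OF majorant]] sums_unique[OF majorant] by simp
qed

lemma weyl_matrix_column_summable:
  assumes "t \<ge> 0"
  shows "summable (\<lambda>l. cmod (weyl_matrix u l j) * t ^ l / sqrt (fact l))"
  using weyl_matrix_row_bound(1)[OF assms, of "- u" j] by (subst weyl_matrix_adjoint) simp

lemma weyl_matrix_row_has_sum:
  "((\<lambda>j. weyl_matrix u l j * v ^ j / sqrt_fact j) has_sum (weyl_gen_factor u v * (u + v) ^ l / sqrt_fact l)) UNIV"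
  by (rule norm_summable_imp_has_sum[OF _ weyl_matrix_sums])
    (use weyl_matrix_row_bound(1)[of "cmod v" u l] in \<open>simp add: norm_mult norm_divide norm_power\<close>)

lemma abs_summable_weyl_double_series:
  "(\<lambda>(l, j). norm (cnj (weyl_matrix u1 l i) * (weyl_matrix u2 l j * v ^ j / sqrt_fact j))) summable_on UNIV \<times> UNIV"
proof -
  define F where "F = (\<lambda>(l, j). cnj (weyl_matrix u1 l i) * (weyl_matrix u2 l j * v ^ j / sqrt_fact j))"
  define R where "R l = (\<Sum>j. cmod (weyl_matrix u2 l j) * cmod v ^ j / sqrt (fact j))" for l
  define K where "K = exp (- (cmod u2)\<^sup>2 / 2) * exp (cmod u2 * cmod v)"
  have norm_F: "norm (F (l, j)) = cmod (weyl_matrix u1 l i) * (cmod (weyl_matrix u2 l j) * cmod v ^ j / sqrt (fact j))" for l j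
    unfolding F_def by (simp add: norm_mult norm_divide norm_power)
  have row: "((\<lambda>j. norm (F (l, j))) has_sum cmod (weyl_matrix u1 l i) * R l) UNIV" for l
  proof -
    have "summable (\<lambda>j. cmod (weyl_matrix u2 l j) * cmod v ^ j / sqrt (fact j))"
      by (rule weyl_matrix_row_bound(1)) simp
    then have "((\<lambda>j. cmod (weyl_matrix u2 l j) * cmod v ^ j / sqrt (fact j)) has_sum R l) UNIV"
      unfolding R_def by (intro norm_summable_imp_has_sum) (auto simp: summable_sums)
    then show ?thesis
      unfolding norm_F by (rule has_sum_cmult_right)
  qed
  have majorant: "summable (\<lambda>l. K * (cmod (weyl_matrix u1 l i) * (cmod u2 + cmod v) ^ l / sqrt (fact l)))"
    using weyl_matrix_column_summable[of "cmod u2 + cmod v" u1 i] by (intro summable_mult) auto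
  have bound: "norm (cmod (weyl_matrix u1 l i) * R l)
                 \<le> K * (cmod (weyl_matrix u1 l i) * (cmod u2 + cmod v) ^ l / sqrt (fact l))" for l
  proof -
    have "norm (cmod (weyl_matrix u1 l i) * R l) = cmod (weyl_matrix u1 l i) * R l"
      unfolding R_def using weyl_matrix_row_bound(1)[of "cmod v" u2 l] by (simp add: suminf_nonneg)
    also have "\<dots> \<le> cmod (weyl_matrix u1 l i) * (K * (cmod u2 + cmod v) ^ l / sqrt (fact l))"
      unfolding R_def K_def by (intro mult_left_mono weyl_matrix_row_bound(2)) auto
    finally show ?thesis
      by (simp add: field_simps)
  qed
  have "summable (\<lambda>l. cmod (weyl_matrix u1 l i) * R l)"
    by (rule summable_comparison_test[OF _ majorant]) (use bound in blast)
  moreover have "infsum (\<lambda>j. norm (F (l, j))) UNIV = cmod (weyl_matrix u1 l i) * R l" for l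
    using infsumI[OF row[of l]] .
  moreover have "R l \<ge> 0" for l
    unfolding R_def using weyl_matrix_row_bound(1)[of "cmod v" u2 l] by (simp add: suminf_nonneg)
  ultimately have "(\<lambda>l. norm (infsum (\<lambda>j. norm (F (l, j))) UNIV)) summable_on UNIV"
    by (subst summable_on_UNIV_nonneg_real_iff) auto
  moreover have "(\<lambda>j. norm (F (l, j))) summable_on UNIV" for l
    using row by (auto simp: summable_on_def)
  ultimately have "(\<lambda>x. norm (F x)) summable_on UNIV \<times> UNIV"
    by (subst Infinite_Sum.abs_summable_on_Sigma_iff) blast
  then show ?thesis
    unfolding F_def by (simp add: case_prod_unfold)
qed

lemma abs_summable_weyl_column_products:
  "(\<lambda>l. norm (cnj (weyl_matrix u1 l i) * weyl_matrix u2 l j)) summable_on UNIV"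
proof -
  have "(\<lambda>(l, j). norm (cnj (weyl_matrix u1 l i) * (weyl_matrix u2 l j * 1 ^ j / sqrt_fact j)))
          summable_on (\<lambda>l. (l, j)) ` UNIV"
    by (rule summable_on_subset_banach[OF abs_summable_weyl_double_series]) simp
  then have "(\<lambda>l. norm (cnj (weyl_matrix u1 l i) * weyl_matrix u2 l j) * (1 / sqrt (fact j))) summable_on UNIV"
    by (subst (asm) summable_on_reindex) (auto simp: inj_on_def o_def norm_mult norm_divide)
  then show ?thesis
    by (subst (asm) summable_on_cmult_left') auto
qed

lemma ip_weyl_columns_sums:
  "(\<lambda>j. ip (\<lambda>l. weyl_matrix u1 l i) (\<lambda>l. weyl_matrix u2 l j) * v ^ j / sqrt_fact j)
     sums (weyl_gen_factor u2 v * (weyl_gen_factor (- u1) (u2 + v) * (- u1 + (u2 + v)) ^ i / sqrt_fact i))"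
    (is "_ sums ?G")
proof -
  \<comment> \<open>Fubini: summing over j and then over l, the inner sums are generating functions of
    the rows of W(u2), then of the rows of W(-u1) = W(u1)^*.\<close>
  define F where "F = (\<lambda>(l, j). cnj (weyl_matrix u1 l i) * (weyl_matrix u2 l j * v ^ j / sqrt_fact j))"
  have F: "F summable_on UNIV \<times> UNIV"
    by (rule abs_summable_summable) (use abs_summable_weyl_double_series in \<open>simp add: F_def case_prod_unfold\<close>)
  have rows: "((\<lambda>j. F (l, j)) has_sum weyl_gen_factor u2 v * (weyl_matrix (- u1) i l * (u2 + v) ^ l / sqrt_fact l)) UNIV" for l
    using has_sum_cmult_right[OF weyl_matrix_row_has_sum[of u2 l v], of "weyl_matrix (- u1) i l"]
    by (subst (asm) weyl_matrix_adjoint) (simp add: F_def algebra_simps)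
  have "((\<lambda>l. weyl_gen_factor u2 v * (weyl_matrix (- u1) i l * (u2 + v) ^ l / sqrt_fact l)) has_sum ?G) UNIV"
    using has_sum_cmult_right[OF weyl_matrix_row_has_sum[of "- u1" i "u2 + v"], of "weyl_gen_factor u2 v"]
    by (simp only: mult.assoc)
  from has_sum_SigmaI[OF rows this F] have "((\<lambda>(j, l). F (l, j)) has_sum ?G) (UNIV \<times> UNIV)"
    by (subst (asm) has_sum_swap) simp
  moreover have columns: "((\<lambda>l. F (l, j)) has_sum ip (\<lambda>l. weyl_matrix u1 l i) (\<lambda>l. weyl_matrix u2 l j) * v ^ j / sqrt_fact j) UNIV" for j
  proof -
    have "((\<lambda>l. cnj (weyl_matrix u1 l i) * weyl_matrix u2 l j) has_sum ip (\<lambda>l. weyl_matrix u1 l i) (\<lambda>l. weyl_matrix u2 l j)) UNIV"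
      unfolding ip_def using abs_summable_summable[OF abs_summable_weyl_column_products] by (rule has_sum_infsum)
    from has_sum_cmult_left[OF this, of "v ^ j / sqrt_fact j"] show ?thesis
      by (simp add: F_def mult.assoc)
  qed
  ultimately show ?thesis
    using has_sum_SigmaD[where f = "\<lambda>(j, l). F (l, j)" and S = ?G and A = UNIV and B = "\<lambda>_. UNIV"]
    by (intro has_sum_imp_sums) simp
qed

text \<open>The scalar in W(u1)^* W(u2) = weyl_cocycle u1 u2 W(u2 - u1), a phase.\<close>

definition weyl_cocycle :: "complex \<Rightarrow> complex \<Rightarrow> complex" where
  "weyl_cocycle u1 u2 = exp (- complex_of_real ((cmod u1)\<^sup>2 / 2) - complex_of_real ((cmod u2)\<^sup>2 / 2)
                             + complex_of_real ((cmod (u2 - u1))\<^sup>2 / 2) + cnj u1 * u2)"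

lemma ip_weyl_columns:
  "ip (\<lambda>l. weyl_matrix u1 l i) (\<lambda>l. weyl_matrix u2 l j) = weyl_cocycle u1 u2 * weyl_matrix (u2 - u1) i j"
proof -
  define G where "G v = weyl_gen_factor u2 v * (weyl_gen_factor (- u1) (u2 + v) * (- u1 + (u2 + v)) ^ i / sqrt_fact i)" for v
  have "weyl_cocycle u1 u2 * weyl_gen_factor (u2 - u1) v = weyl_gen_factor u2 v * weyl_gen_factor (- u1) (u2 + v)" for v
    unfolding weyl_cocycle_def weyl_gen_factor_def by (simp add: mult_exp_exp algebra_simps)
  then have "weyl_cocycle u1 u2 * (weyl_gen_factor (u2 - u1) v * (u2 - u1 + v) ^ i / sqrt_fact i) = G v" for v
    unfolding G_def by (simp add: mult.assoc[symmetric]) (simp add: algebra_simps)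
  then have "(\<lambda>j. weyl_cocycle u1 u2 * weyl_matrix (u2 - u1) i j * v ^ j / sqrt_fact j) sums G v" for v
    using sums_mult[OF weyl_matrix_sums[of "u2 - u1" i v], of "weyl_cocycle u1 u2"]
    by (simp add: mult.assoc)
  then have "(\<lambda>j. ip (\<lambda>l. weyl_matrix u1 l i) (\<lambda>l. weyl_matrix u2 l j) / sqrt_fact j)
               = (\<lambda>j. weyl_cocycle u1 u2 * weyl_matrix (u2 - u1) i j / sqrt_fact j)"
    using ip_weyl_columns_sums[of u1 i u2] unfolding G_def[symmetric]
    by (intro powser_coeffs_unique[where f = G]) (simp_all add: field_simps)
  then show ?thesis
    by (simp add: fun_eq_iff)
qed

lemma ip_displaced_basis:
  "ip (displaced_basis u1 i) (displaced_basis u2 j)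
     = (\<Prod>m\<in>UNIV. weyl_cocycle (u1 m) (u2 m) * weyl_matrix (u2 m - u1 m) (i m) (j m))"
proof -
  have "ip (displaced_basis u1 i) (displaced_basis u2 j) =
     infsum (\<lambda>l. \<Prod>m\<in>UNIV. cnj (weyl_matrix (u1 m) (l m) (i m)) * weyl_matrix (u2 m) (l m) (j m)) (PiE UNIV (\<lambda>_. UNIV))"
    unfolding ip_def displaced_basis_def weyl_elem_eq_weyl_matrix by (simp add: cnj_prod prod.distrib)
  also have "\<dots> = (\<Prod>m\<in>UNIV. ip (\<lambda>l. weyl_matrix (u1 m) l (i m)) (\<lambda>l. weyl_matrix (u2 m) l (j m)))"
    unfolding ip_def by (rule infsum_prod_PiE_abs) (auto intro: abs_summable_weyl_column_products)
  finally show ?thesis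
    by (simp add: ip_weyl_columns)
qed

section \<open>Unitarity and the divergent triangle\<close>

lemma weyl_poly_0_0: "weyl_poly (0::'a::{real_normed_field,banach}) 0 l j = (if l = j then 1 else 0)"
proof -
  have "weyl_poly (0::'a) 0 l j = (\<Sum>p\<le>min l j. if p = l \<and> p = j then of_real (weyl_coeff l j p) else 0)"
    unfolding weyl_poly_def by (rule sum.cong) (auto simp: power_0_left)
  also have "\<dots> = (if l = j then 1 else 0)"
    by (cases "l = j") (auto simp: weyl_coeff_def intro!: sum.neutral)
  finally show ?thesis .
qed

lemma weyl_cocycle_self: "weyl_cocycle u u = 1"
proof -
  have "cnj u * u = complex_of_real ((cmod u)\<^sup>2)"
    by (subst complex_norm_square) (simp add: mult.commute)
  then show ?thesis
    unfolding weyl_cocycle_def by (simp add: field_simps)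
qed

lemma weyl_matrix_column_norm: "((\<lambda>l. (cmod (weyl_matrix u l j))\<^sup>2) has_sum 1) UNIV"
proof -
  have "ip (\<lambda>l. weyl_matrix u l j) (\<lambda>l. weyl_matrix u l j) = 1"
    by (simp only: ip_weyl_columns) (simp add: weyl_cocycle_self weyl_matrix_def weyl_poly_0_0)
  then have "((\<lambda>l. cnj (weyl_matrix u l j) * weyl_matrix u l j) has_sum 1) UNIV"
    using abs_summable_summable[OF abs_summable_weyl_column_products[of u j u j]]
    unfolding ip_def by (metis has_sum_infsum)
  from has_sum_Re[OF this] show ?thesis
    by (simp add: complex_norm_square[symmetric] mult.commute)
qed

lemma weyl_poly_neg_cnj: "weyl_poly (- x) (cnj x) j i = (-1) ^ (i + j) * weyl_poly x (- cnj x) j i"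
  unfolding weyl_poly_def sum_distrib_left
proof (rule sum.cong[OF refl])
  fix p assume "p \<in> {..min j i}"
  then have "i + j + (i - p) = (j - p) + 2 * i"
    by simp
  then have "(-1::complex) ^ (i + j) * (-1) ^ (i - p) = (-1) ^ (j - p)"
    by (simp only: power_add[symmetric]) (simp add: power_add power_mult)
  then show "of_real (weyl_coeff j i p) * (- x) ^ (j - p) * cnj x ^ (i - p) =
        (-1) ^ (i + j) * (of_real (weyl_coeff j i p) * x ^ (j - p) * (- cnj x) ^ (i - p))"
    by (simp add: power_minus[of x] power_minus[of "cnj x"] algebra_simps)
qed

lemma norm_weyl_matrix_transpose: "cmod (weyl_matrix u i j) = cmod (weyl_matrix u j i)"
proof -
  have "cmod (weyl_matrix u i j) = cmod (weyl_matrix (- u) j i)"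
    by (subst weyl_matrix_adjoint) simp
  also have "\<dots> = cmod (weyl_matrix u j i)"
    unfolding weyl_matrix_def by (simp add: weyl_poly_neg_cnj norm_mult norm_power)
  finally show ?thesis .
qed

lemma weyl_matrix_upper_not_summable:
  "\<not> (\<lambda>(a, b). (cmod (weyl_matrix u a b))\<^sup>2) summable_on {(a, b). a \<le> b}"
proof
  define h where "h = (\<lambda>(a, b). (cmod (weyl_matrix u a b))\<^sup>2)"
  assume "(\<lambda>(a, b). (cmod (weyl_matrix u a b))\<^sup>2) summable_on {(a, b). a \<le> b}"
  then have upper: "h summable_on {(a, b). a \<le> b}"
    unfolding h_def .
  have "h \<circ> prod.swap = h"
    unfolding h_def by (auto simp: fun_eq_iff norm_weyl_matrix_transpose)
  then have "h summable_on prod.swap ` {(a, b). a \<le> b}"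
    using upper by (subst summable_on_reindex) auto
  then have "h summable_on {(a, b). b < a}"
    by (rule summable_on_subset_banach) (auto simp: image_def)
  then have "h summable_on {(a, b). a \<le> b} \<union> {(a, b). b < a}"
    by (intro summable_on_Un_disjoint[OF upper]) auto
  moreover have "{(a::nat, b::nat). a \<le> b} \<union> {(a, b). b < a} = UNIV"
    by auto
  ultimately have "(\<lambda>(b, a). h (a, b)) summable_on UNIV \<times> UNIV"
    using summable_on_swap[of h UNIV UNIV] by simp
  then have "(\<lambda>b. infsum (\<lambda>a. h (a, b)) UNIV) summable_on UNIV"
    using summable_on_Sigma_banach[of "\<lambda>b a. h (a, b)" UNIV "\<lambda>_. UNIV"] by simp
  moreover have "infsum (\<lambda>a. h (a, b)) UNIV = 1" for b
    unfolding h_def using weyl_matrix_column_norm[of u b] by (simp add: infsumI)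
  ultimately have "summable (\<lambda>b::nat. 1::real)"
    by (subst (asm) summable_on_UNIV_nonneg_real_iff) auto
  then show False
    by (simp add: summable_const_iff)
qed

section \<open>Finiteness of the Renyi divergence\<close>

lemma thermal_eig_pos:
  assumes "\<forall>j. 0 < s j"
  shows "thermal_eig s k > 0"
  unfolding thermal_eig_def using assms by (intro prod_pos) auto

lemma thermal_eig_single_mode:
  "thermal_eig s ((\<lambda>_. 0)(j := a)) = (\<Prod>m\<in>UNIV. 1 - exp (- s m)) * exp (- real a * s j)"
proof -
  have "(\<Prod>m\<in>UNIV. exp (- real (((\<lambda>_. 0)(j := a)) m) * s m))
          = exp (\<Sum>m\<in>UNIV. - real (((\<lambda>_. 0)(j := a)) m) * s m)"
    by (simp add: exp_sum)
  also have "(\<Sum>m\<in>UNIV. - real (((\<lambda>_. 0)(j := a)) m) * s m) = (\<Sum>m\<in>UNIV. if m = j then - real a * s j else 0)"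
    by (rule sum.cong) auto
  finally show ?thesis
    unfolding thermal_eig_def prod.distrib by simp
qed

lemma summable_on_if_infsum_ennreal_ne_top:
  fixes f :: "'a \<Rightarrow> real"
  assumes "\<And>x. f x \<ge> 0" and "infsum (\<lambda>x. ennreal (f x)) A \<noteq> top"
  shows "f summable_on A"
proof (rule nonneg_bdd_above_summable_on)
  show "bdd_above (sum f ` {F. F \<subseteq> A \<and> finite F})"
  proof (rule bdd_aboveI2)
    fix F assume "F \<in> {F. F \<subseteq> A \<and> finite F}"
    then have "ennreal (sum f F) = infsum (\<lambda>x. ennreal (f x)) F"
      using assms(1) by simp
    also have "\<dots> \<le> infsum (\<lambda>x. ennreal (f x)) A"
      using \<open>F \<in> _\<close> by (intro infsum_mono_neutral) (auto intro: nonneg_summable_on_complete)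
    also have "\<dots> = ennreal (enn2real (infsum (\<lambda>x. ennreal (f x)) A))"
      using assms(2) by (simp add: top.not_eq_extremum)
    finally show "sum f F \<le> enn2real (infsum (\<lambda>x. ennreal (f x)) A)"
      by (simp add: ennreal_le_iff)
  qed
qed (use assms in auto)

lemma renyi_div_displaced_thermal_finite_imp_summable:
  fixes r s :: "'n::finite \<Rightarrow> real" and u1 u2 :: "'n \<Rightarrow> complex"
  assumes "\<forall>j. 0 < s j"
    and "renyi_div \<alpha> (thermal_eig r) (displaced_basis u1) (thermal_eig s) (displaced_basis u2) < \<infinity>"
  shows "(\<lambda>(i, j). thermal_eig r i powr \<alpha> * thermal_eig s j powr (1 - \<alpha>)
                    * (cmod (ip (displaced_basis u1 i) (displaced_basis u2 j)))\<^sup>2) summable_on UNIV"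
    (is "?f summable_on UNIV")
proof (rule summable_on_if_infsum_ennreal_ne_top)
  show "?f x \<ge> 0" for x
    by (auto simp: case_prod_unfold)
  have "thermal_eig s j \<noteq> 0" for j
    using thermal_eig_pos[OF assms(1)] by (metis less_irrefl)
  then have "(\<lambda>(i, j). ennreal (thermal_eig r i powr \<alpha>) * neg_pow_term \<alpha> (thermal_eig s j)
                * ennreal ((cmod (ip (displaced_basis u1 i) (displaced_basis u2 j)))\<^sup>2)) = (\<lambda>x. ennreal (?f x))"
    by (auto simp: fun_eq_iff neg_pow_term_def ennreal_mult)
  then show "infsum (\<lambda>x. ennreal (?f x)) UNIV \<noteq> top"
    using assms(2) unfolding renyi_div_def Let_def by (auto split: if_splits)
qed

lemma displaced_thermal_summand_single_mode:
  fixes r s :: "'n::finite \<Rightarrow> real" and u1 u2 :: "'n \<Rightarrow> complex"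
  assumes "\<forall>j. 0 < r j" and "\<forall>j. 0 < s j"
  shows "\<exists>C>0. \<forall>a b.
           thermal_eig r ((\<lambda>_. 0)(j := a)) powr \<alpha> * thermal_eig s ((\<lambda>_. 0)(j := b)) powr (1 - \<alpha>)
             * (cmod (ip (displaced_basis u1 ((\<lambda>_. 0)(j := a))) (displaced_basis u2 ((\<lambda>_. 0)(j := b)))))\<^sup>2
           = C * exp (- \<alpha> * real a * r j + (\<alpha> - 1) * real b * s j) * (cmod (weyl_matrix (u2 j - u1 j) a b))\<^sup>2"
proof -
  define factor where "factor m a b = (cmod (weyl_cocycle (u1 m) (u2 m) * weyl_matrix (u2 m - u1 m) a b))\<^sup>2" for m a b
  define P where "P = (\<Prod>m\<in>UNIV. 1 - exp (- r m))"
  define Q where "Q = (\<Prod>m\<in>UNIV. 1 - exp (- s m))"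
  define K where "K = (\<Prod>m\<in>UNIV - {j}. factor m 0 0)"
  define C where "C = P powr \<alpha> * Q powr (1 - \<alpha>) * (cmod (weyl_cocycle (u1 j) (u2 j)))\<^sup>2 * K"
  have "weyl_matrix x 0 0 \<noteq> 0" for x
    unfolding weyl_matrix_def weyl_poly_def by (simp add: weyl_coeff_def)
  then have "K > 0"
    unfolding K_def factor_def weyl_cocycle_def by (intro prod_pos) auto
  moreover have "P > 0" "Q > 0"
    unfolding P_def Q_def using assms by (auto intro!: prod_pos)
  ultimately have "C > 0"
    unfolding C_def by (simp add: weyl_cocycle_def)
  moreover have "thermal_eig r ((\<lambda>_. 0)(j := a)) powr \<alpha> * thermal_eig s ((\<lambda>_. 0)(j := b)) powr (1 - \<alpha>)
             * (cmod (ip (displaced_basis u1 ((\<lambda>_. 0)(j := a))) (displaced_basis u2 ((\<lambda>_. 0)(j := b)))))\<^sup>2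
           = C * exp (- \<alpha> * real a * r j + (\<alpha> - 1) * real b * s j) * (cmod (weyl_matrix (u2 j - u1 j) a b))\<^sup>2" for a b
  proof -
    have "(cmod (ip (displaced_basis u1 ((\<lambda>_. 0)(j := a))) (displaced_basis u2 ((\<lambda>_. 0)(j := b)))))\<^sup>2
            = (\<Prod>m\<in>UNIV. factor m (((\<lambda>_. 0)(j := a)) m) (((\<lambda>_. 0)(j := b)) m))"
      unfolding ip_displaced_basis factor_def by (simp add: prod_norm[symmetric] prod_power_distrib)
    also have "\<dots> = factor j a b * K"
      unfolding K_def by (subst prod.remove[of _ j]) (auto intro!: prod.cong)
    finally have "(cmod (ip (displaced_basis u1 ((\<lambda>_. 0)(j := a))) (displaced_basis u2 ((\<lambda>_. 0)(j := b)))))\<^sup>2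
                    = (cmod (weyl_cocycle (u1 j) (u2 j)))\<^sup>2 * (cmod (weyl_matrix (u2 j - u1 j) a b))\<^sup>2 * K"
      by (simp add: factor_def norm_mult power_mult_distrib)
    moreover have "(P * exp (- real a * r j)) powr \<alpha> * (Q * exp (- real b * s j)) powr (1 - \<alpha>)
                     = P powr \<alpha> * Q powr (1 - \<alpha>) * exp (- \<alpha> * real a * r j + (\<alpha> - 1) * real b * s j)"
      using \<open>P > 0\<close> \<open>Q > 0\<close> by (simp add: powr_mult exp_powr_real exp_add[symmetric] algebra_simps)
    ultimately show ?thesis
      unfolding thermal_eig_single_mode P_def[symmetric] Q_def[symmetric] C_def by (simp add: algebra_simps)
  qed
  ultimately show ?thesis
    by blast
qed

lemma renyi_div_displaced_thermal_finite_imp_less: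
  fixes r s :: "'n::finite \<Rightarrow> real" and u1 u2 :: "'n \<Rightarrow> complex"
  assumes r: "\<forall>j. 0 < r j" and s: "\<forall>j. 0 < s j" and "\<alpha> > 1"
    and D_finite: "renyi_div \<alpha> (thermal_eig r) (displaced_basis u1) (thermal_eig s) (displaced_basis u2) < \<infinity>"
  shows "(\<alpha> - 1) * s j < \<alpha> * r j"
proof (rule ccontr)
  assume "\<not> (\<alpha> - 1) * s j < \<alpha> * r j"
  then have le: "\<alpha> * r j \<le> (\<alpha> - 1) * s j"
    by simp
  define f where "f = (\<lambda>(i, j). thermal_eig r i powr \<alpha> * thermal_eig s j powr (1 - \<alpha>)
                    * (cmod (ip (displaced_basis u1 i) (displaced_basis u2 j)))\<^sup>2)"
  define g where "g = (\<lambda>(a, b). ((\<lambda>_. 0::nat)(j := a), (\<lambda>_. 0::nat)(j := b)))"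
  define U where "U = {(a::nat, b::nat). a \<le> b}"
  define W where "W = weyl_matrix (u2 j - u1 j)"
  obtain C where "C > 0" and C: "\<And>a b. f (g (a, b)) = C * exp (- \<alpha> * real a * r j + (\<alpha> - 1) * real b * s j) * (cmod (W a b))\<^sup>2"
    using displaced_thermal_summand_single_mode[OF r s, of j \<alpha> u1 u2] unfolding f_def g_def W_def by auto
  have "inj_on g U"
    by (auto simp: inj_on_def g_def fun_eq_iff split: if_splits)
  moreover have "f summable_on g ` U"
    using renyi_div_displaced_thermal_finite_imp_summable[OF s D_finite, folded f_def]
    by (rule summable_on_subset_banach) simp
  ultimately have fg_summable: "(f \<circ> g) summable_on U"
    by (subst (asm) summable_on_reindex)
  have lower: "C * (cmod (W a b))\<^sup>2 \<le> (f \<circ> g) (a, b)" if "(a, b) \<in> U" for a b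
  proof -
    have "\<alpha> * real a * r j \<le> (\<alpha> - 1) * real a * s j"
      using mult_left_mono[OF le, of "real a"] by (simp add: algebra_simps)
    also have "\<dots> \<le> (\<alpha> - 1) * real b * s j"
      using that \<open>\<alpha> > 1\<close> s unfolding U_def by (intro mult_right_mono mult_left_mono) (auto simp: less_imp_le)
    finally have "1 \<le> exp (- \<alpha> * real a * r j + (\<alpha> - 1) * real b * s j)"
      by simp
    then have "C * (cmod (W a b))\<^sup>2 * 1 \<le> C * (cmod (W a b))\<^sup>2 * exp (- \<alpha> * real a * r j + (\<alpha> - 1) * real b * s j)"
      using \<open>C > 0\<close> by (intro mult_left_mono) auto
    then show ?thesis
      by (simp add: C algebra_simps)
  qed
  have "(\<lambda>(a, b). C * (cmod (W a b))\<^sup>2) summable_on U"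
    by (rule summable_on_comparison_test[OF fg_summable]) (use lower \<open>C > 0\<close> in auto)
  then have "(\<lambda>(a, b). (cmod (W a b))\<^sup>2) summable_on U"
    using summable_on_cmult_right'[of C "\<lambda>(a, b). (cmod (W a b))\<^sup>2" U] \<open>C > 0\<close>
    by (simp add: case_prod_unfold)
  then show False
    using weyl_matrix_upper_not_summable unfolding U_def W_def by blast
qed

lemma coth_less_coth:
  assumes "0 < x" and "x < y"
  shows "coth y < coth x"
proof -
  have "sinh x > 0" and "sinh y > 0"
    using assms by auto
  moreover have "sinh (y - x) > 0"
    using assms by simp
  then have "cosh y * sinh x < cosh x * sinh y"
    by (simp add: sinh_diff algebra_simps)
  ultimately show ?thesis
    unfolding coth_def by (simp add: divide_simps mult.commute)
qed

lemma pos_def_diagonal: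
  assumes "\<And>i. d i > 0"
  shows "pos_def (\<lambda>i k. if i = k then d i else 0)"
  unfolding pos_def_def
proof (intro allI impI)
  fix x :: "'a \<Rightarrow> real"
  assume "\<exists>i. x i \<noteq> 0"
  then obtain i0 where "x i0 \<noteq> 0"
    by blast
  have "(\<Sum>k\<in>UNIV. x i * (if i = k then d i else 0) * x k) = d i * (x i)\<^sup>2" for i
  proof -
    have "x i * (if i = k then d i else 0) * x k = (if k = i then d i * (x i)\<^sup>2 else 0)" for k
      by (auto simp: power2_eq_square)
    then show ?thesis
      by simp
  qed
  then have "(\<Sum>i\<in>UNIV. \<Sum>k\<in>UNIV. x i * (if i = k then d i else 0) * x k) = (\<Sum>i\<in>UNIV. d i * (x i)\<^sup>2)"
    by simp
  also have "\<dots> > 0"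
    using assms \<open>x i0 \<noteq> 0\<close> by (intro sum_pos2[of UNIV i0]) (simp_all add: less_imp_le)
  finally show "0 < (\<Sum>i\<in>UNIV. \<Sum>k\<in>UNIV. x i * (if i = k then d i else 0) * x k)" .
qed

theorem theorem3p7:
  fixes r s :: "'n::finite \<Rightarrow> real" and u1 u2 :: "'n \<Rightarrow> complex" and \<alpha> :: real
  assumes "\<forall>j. 0 < r j" and "\<forall>j. 0 < s j" and "\<alpha> > 1"
    and "renyi_div \<alpha> (thermal_eig r) (displaced_basis u1)
                   (thermal_eig s) (displaced_basis u2) < \<infinity>"
  shows "pos_def (\<lambda>a b. cov_thermal (\<lambda>j. (\<alpha> - 1) * s j) a b
                       - cov_thermal (\<lambda>j. \<alpha> * r j) a b)"
proof -
  define d where "d i = coth ((\<alpha> - 1) * s (fst i) / 2) / 2 - coth (\<alpha> * r (fst i) / 2) / 2" for i :: "'n \<times> bool"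
  have "d i > 0" for i
  proof -
    have "(\<alpha> - 1) * s (fst i) < \<alpha> * r (fst i)"
      using renyi_div_displaced_thermal_finite_imp_less[OF assms] .
    then have "coth (\<alpha> * r (fst i) / 2) < coth ((\<alpha> - 1) * s (fst i) / 2)"
      using assms(2,3) by (intro coth_less_coth) auto
    then show ?thesis
      unfolding d_def by simp
  qed
  moreover have "cov_thermal (\<lambda>j. (\<alpha> - 1) * s j) a b - cov_thermal (\<lambda>j. \<alpha> * r j) a b
                   = (if a = b then d a else 0)" for a b
    unfolding cov_thermal_def d_def by (cases a; cases b) auto
  ultimately show ?thesis
    using pos_def_diagonal[of d] by simp
qed

end
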